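(* Let $f_1,\dots,f_M:\mathbb{R}\to(0,1)$ be continuous, strictly increasing cumulative distribution functions and let $w_1\ge\dots\ge w_M> 0$ with $\sum_{i=1}^M w_i=1$; set $F(x)=\sum_{i=1}^M w_i f_i(x)$. For $\epsilon\in(0,1)$ let $k$ be the smallest integer with $\sum_{i=1}^k w_i\ge 1-\epsilon$, let $c:=\sum_{i=1}^k w_i$ and $F_k(x):=\frac{1}{c}\sum_{i=1}^k w_i f_i(x)$. Let $p\in(0,1)$ with $p-2\epsilon\in(0,1)$ and $p+2\epsilon\in(0,1)$. Then \[F^{-1}(p-2\epsilon)\le F_k^{-1}(p)\le F^{-1}(p+2\epsilon).\]
   Context: For a continuous strictly increasing cdf $G$ and $q\in(0,1)$, $G^{-1}(q)$ denotes the unique $x$ with $G(x)=q$ (the $q$-quantile). *)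

theory Defs
  imports "HOL-Analysis.Analysis"
begin

definition cts_strict_cdf :: "(real \<Rightarrow> real) \<Rightarrow> bool" where
  "cts_strict_cdf G \<longleftrightarrow> continuous_on UNIV G \<and> strict_mono G \<and>
     (\<forall>x. 0 < G x \<and> G x < 1) \<and>
     (G \<longlongrightarrow> 0) at_bot \<and> (G \<longlongrightarrow> 1) at_top"

definition quantile :: "(real \<Rightarrow> real) \<Rightarrow> real \<Rightarrow> real" where
  "quantile G q = (THE x. G x = q)"

end

theory Submission
  imports Defs
begin

text \<open>
  Truncating the mixture to its first k components and renormalising moves the mixture cdf by
  at most the discarded weight 1 - c \<le> \<epsilon>, uniformly in x: with h the head sum and t the tail sum,
  F - F_k = t - (1 - c) h / c, and both terms lie in [0, 1 - c].  A uniform perturbation of a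
  continuous strictly increasing cdf by \<delta> shifts its quantiles by at most \<delta> in the level.
\<close>

lemma quantile_eqI: "strict_mono G \<Longrightarrow> G x = q \<Longrightarrow> quantile G q = x"
  unfolding quantile_def by (rule the_equality) (auto dest: strict_mono_eq)

lemma cts_strict_cdf_attains:
  assumes G: "cts_strict_cdf G" and q: "0 < q" "q < 1"
  shows "\<exists>x. G x = q"
proof -
  from G have cont: "continuous_on UNIV G" and mono: "strict_mono G"
    and bot: "(G \<longlongrightarrow> 0) at_bot" and top: "(G \<longlongrightarrow> 1) at_top"
    unfolding cts_strict_cdf_def by blast+
  obtain a where a: "G a < q"
    using order_tendstoD(2)[OF bot q(1)] unfolding eventually_at_bot_linorder by blast
  obtain b where b: "q < G b"
    using order_tendstoD(1)[OF top q(2)] unfolding eventually_at_top_linorder by blast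
  have "G a \<le> G b"
    using a b by simp
  then have "a \<le> b"
    using strict_mono_less_eq[OF mono] by blast
  moreover have "continuous_on {a..b} G"
    using cont continuous_on_subset by blast
  ultimately show ?thesis
    using IVT'[of G a q b] a b by force
qed

lemma cts_strict_cdf_quantile:
  assumes "cts_strict_cdf G" "0 < q" "q < 1"
  shows "G (quantile G q) = q"
proof -
  have mono: "strict_mono G"
    using assms(1) unfolding cts_strict_cdf_def by blast
  obtain x where x: "G x = q"
    using cts_strict_cdf_attains[OF assms] by blast
  have "quantile G q = x"
    using quantile_eqI[OF mono x] .
  with x show ?thesis
    by simp
qed

lemma
  assumes G: "cts_strict_cdf G" and q: "0 < q" "q < 1"
  shows quantile_le_iff: "quantile G q \<le> x \<longleftrightarrow> q \<le> G x"
    and le_quantile_iff: "x \<le> quantile G q \<longleftrightarrow> G x \<le> q"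
proof -
  have "strict_mono G"
    using G unfolding cts_strict_cdf_def by blast
  then show "quantile G q \<le> x \<longleftrightarrow> q \<le> G x" "x \<le> quantile G q \<longleftrightarrow> G x \<le> q"
    using cts_strict_cdf_quantile[OF G q] by (metis strict_mono_less_eq)+
qed

lemma quantile_bounds_of_uniform_dist:
  assumes G: "cts_strict_cdf G" and H: "cts_strict_cdf H"
    and dist: "\<And>x. \<bar>G x - H x\<bar> \<le> \<delta>"
    and p: "0 < p" "p < 1" and lower: "0 < p - \<delta>" and upper: "p + \<delta> < 1"
  shows "quantile G (p - \<delta>) \<le> quantile H p \<and> quantile H p \<le> quantile G (p + \<delta>)"
proof -
  define x where "x = quantile H p"
  have "H x = p"
    unfolding x_def using cts_strict_cdf_quantile[OF H p] .
  then have "p - \<delta> \<le> G x" "G x \<le> p + \<delta>"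
    using dist[of x] by linarith+
  moreover have "p - \<delta> < 1" "0 < p + \<delta>"
    using dist[of x] p lower upper by linarith+
  ultimately show ?thesis
    unfolding x_def[symmetric] using quantile_le_iff[OF G] le_quantile_iff[OF G] lower upper
    by blast
qed

lemma cts_strict_cdf_mixture:
  fixes f :: "'i \<Rightarrow> real \<Rightarrow> real" and w :: "'i \<Rightarrow> real"
  assumes I: "finite I" "I \<noteq> {}"
    and cdf: "\<And>i. i \<in> I \<Longrightarrow> cts_strict_cdf (f i)" and w: "\<And>i. i \<in> I \<Longrightarrow> 0 < w i"
  shows "cts_strict_cdf (\<lambda>x. (1 / (\<Sum>i\<in>I. w i)) * (\<Sum>i\<in>I. w i * f i x))"
    (is "cts_strict_cdf ?G")
proof -
  define C where "C = (\<Sum>i\<in>I. w i)"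
  have C: "0 < C"
    unfolding C_def using I w by (intro sum_pos) auto
  have fI: "continuous_on UNIV (f i)" "strict_mono (f i)" "0 < f i x" "f i x < 1"
    "(f i \<longlongrightarrow> 0) at_bot" "(f i \<longlongrightarrow> 1) at_top" if "i \<in> I" for i x
    using cdf[OF that] unfolding cts_strict_cdf_def by blast+
  have "continuous_on UNIV ?G"
    by (intro continuous_on_mult continuous_on_const continuous_on_sum fI)
  moreover have "strict_mono ?G"
  proof (rule strict_monoI)
    fix x y :: real
    assume "x < y"
    then have "w i * f i x < w i * f i y" if "i \<in> I" for i
      using fI(2)[OF that] w[OF that] by (simp add: strict_mono_less)
    then have "(\<Sum>i\<in>I. w i * f i x) < (\<Sum>i\<in>I. w i * f i y)"
      using I by (intro sum_strict_mono) auto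
    then show "?G x < ?G y"
      using C unfolding C_def[symmetric] by (simp add: divide_strict_right_mono)
  qed
  moreover have "0 < ?G x \<and> ?G x < 1" for x
  proof -
    have "0 < (\<Sum>i\<in>I. w i * f i x)"
      using I w fI(3) by (intro sum_pos) auto
    moreover have "(\<Sum>i\<in>I. w i * f i x) < C"
      unfolding C_def using I w fI(4) by (intro sum_strict_mono) auto
    ultimately show ?thesis
      using C unfolding C_def[symmetric] by simp
  qed
  moreover have "(?G \<longlongrightarrow> (1 / C) * (\<Sum>i\<in>I. w i * 0)) at_bot"
    unfolding C_def by (intro tendsto_mult tendsto_const tendsto_sum fI)
  moreover have "(?G \<longlongrightarrow> (1 / C) * (\<Sum>i\<in>I. w i * 1)) at_top"
    unfolding C_def by (intro tendsto_mult tendsto_const tendsto_sum fI)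
  ultimately show ?thesis
    using C unfolding cts_strict_cdf_def C_def by simp
qed

lemma abs_mixture_minus_truncation_le:
  fixes w g :: "'i \<Rightarrow> real"
  assumes B: "finite B" and AB: "A \<subseteq> B"
    and w: "\<And>i. i \<in> B \<Longrightarrow> 0 \<le> w i" and g: "\<And>i. i \<in> B \<Longrightarrow> 0 \<le> g i \<and> g i \<le> 1"
    and total: "(\<Sum>i\<in>B. w i) = 1" and c: "0 < (\<Sum>i\<in>A. w i)"
  shows "\<bar>(\<Sum>i\<in>B. w i * g i) - (1 / (\<Sum>i\<in>A. w i)) * (\<Sum>i\<in>A. w i * g i)\<bar>
    \<le> 1 - (\<Sum>i\<in>A. w i)"
proof -
  define c h t where "c = (\<Sum>i\<in>A. w i)" and "h = (\<Sum>i\<in>A. w i * g i)"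
    and "t = (\<Sum>i\<in>B - A. w i * g i)"
  have A: "finite A"
    using B AB finite_subset by blast
  have split: "(\<Sum>i\<in>B. u i) = (\<Sum>i\<in>A. u i) + (\<Sum>i\<in>B - A. u i)" for u :: "'i \<Rightarrow> real"
    using sum.subset_diff[OF AB B] by (simp add: add.commute)
  have "0 \<le> t" "t \<le> (\<Sum>i\<in>B - A. w i)"
    unfolding t_def using w g by (auto intro!: sum_nonneg sum_mono mult_nonneg_nonneg mult_left_le)
  then have t: "0 \<le> t" "t \<le> 1 - c"
    using split[of w] total unfolding c_def by auto
  have "0 \<le> h" "h \<le> c"
    unfolding h_def c_def using AB w g by (auto intro!: sum_nonneg sum_mono mult_left_le)
  then have hc: "0 \<le> h / c" "h / c \<le> 1"
    using c unfolding c_def[symmetric] by simp_all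
  have "0 \<le> 1 - c"
    using t by linarith
  then have "0 \<le> (1 - c) * (h / c)" "(1 - c) * (h / c) \<le> 1 - c"
    using mult_nonneg_nonneg[OF _ hc(1)] mult_left_le[OF hc(2)] by blast+
  moreover have "(\<Sum>i\<in>B. w i * g i) - (1 / c) * h = t - (1 - c) * (h / c)"
    using split[of "\<lambda>i. w i * g i"] c unfolding c_def[symmetric] h_def[symmetric] t_def[symmetric]
    by (simp add: field_simps)
  ultimately show ?thesis
    using t unfolding c_def h_def by linarith
qed

theorem proposition1:
  fixes M :: nat and f :: "nat \<Rightarrow> real \<Rightarrow> real" and w :: "nat \<Rightarrow> real"
    and \<epsilon> p :: real
  assumes cdf: "\<And>i. i \<in> {1..M} \<Longrightarrow> cts_strict_cdf (f i)"
    and w_mono: "\<And>i j. 1 \<le> i \<Longrightarrow> i \<le> j \<Longrightarrow> j \<le> M \<Longrightarrow> w j \<le> w i"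
    and w_pos: "\<And>i. i \<in> {1..M} \<Longrightarrow> 0 < w i"
    and w_sum: "(\<Sum>i=1..M. w i) = 1"
    and eps: "0 < \<epsilon>" "\<epsilon> < 1"
    and p: "0 < p" "p < 1"
    and pm: "0 < p - 2*\<epsilon>" "p - 2*\<epsilon> < 1"
    and pp: "0 < p + 2*\<epsilon>" "p + 2*\<epsilon> < 1"
  defines "F \<equiv> (\<lambda>x. \<Sum>i=1..M. w i * f i x)"
    and "k \<equiv> (LEAST k::nat. (\<Sum>i=1..k. w i) \<ge> 1 - \<epsilon>)"
  defines "c \<equiv> (\<Sum>i=1..k. w i)"
  defines "F\<^sub>k \<equiv> (\<lambda>x. (1 / c) * (\<Sum>i=1..k. w i * f i x))"
  shows "quantile F (p - 2*\<epsilon>) \<le> quantile F\<^sub>k p \<and> quantile F\<^sub>k p \<le> quantile F (p + 2*\<epsilon>)"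
proof -
  have M_admissible: "1 - \<epsilon> \<le> (\<Sum>i=1..M. w i)"
    using w_sum eps by simp
  have "k \<le> M"
    unfolding k_def using M_admissible by (rule Least_le)
  then have kM: "{1..k} \<subseteq> {1..M}"
    by auto
  have c_ge: "1 - \<epsilon> \<le> c"
    unfolding k_def c_def using M_admissible by (rule LeastI)
  then have c: "0 < c"
    using eps by linarith
  then have "k \<noteq> 0"
    unfolding c_def by (intro notI) simp
  then have k: "{1..k} \<noteq> {}"
    by simp
  have "{1..M} \<noteq> {}"
    using kM k by blast
  then have "cts_strict_cdf (\<lambda>x. (1 / (\<Sum>i=1..M. w i)) * (\<Sum>i=1..M. w i * f i x))"
    by (intro cts_strict_cdf_mixture cdf w_pos) auto
  then have F: "cts_strict_cdf F"
    unfolding F_def w_sum by simp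
  have F\<^sub>k: "cts_strict_cdf F\<^sub>k"
    unfolding F\<^sub>k_def c_def using k kM by (intro cts_strict_cdf_mixture cdf w_pos) auto
  have dist: "\<bar>F x - F\<^sub>k x\<bar> \<le> 2 * \<epsilon>" for x
  proof -
    have "\<bar>F x - F\<^sub>k x\<bar> \<le> 1 - c"
      unfolding F_def F\<^sub>k_def c_def using w_pos cdf w_sum c kM
      by (intro abs_mixture_minus_truncation_le)
        (auto simp: cts_strict_cdf_def c_def less_imp_le)
    then show ?thesis
      using c_ge by linarith
  qed
  show ?thesis
    using quantile_bounds_of_uniform_dist[OF F F\<^sub>k dist p pm(1) pp(2)] .
qed

end
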